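(* Let $1\le r\le n$ be integers and $A\in RB(r,n)$. Then $$\mathrm{per}\!\left(\tfrac1r A\right)\ \le\ (\sqrt2)^n\, F\!\left(\tfrac1r A\right).$$
   Context: $RB(r,n)$ is the set of $n\times n$ $0/1$ matrices all of whose row and column sums equal $r$. $\mathrm{per}$ is the permanent. For a doubly-stochastic $n\times n$ matrix $P$, $F(P)=\prod_{1\le i,j\le n}(1-P(i,j))^{1-P(i,j)}$, with $0^0=1$. *)

theory Defs
  imports "HOL-Analysis.Analysis" "HOL-Combinatorics.Permutations"
begin

text \<open>n x n matrices are represented as functions nat => nat => real,
  indices ranging over {0..<n}.\<close>

definition RB :: "nat \<Rightarrow> nat \<Rightarrow> (nat \<Rightarrow> nat \<Rightarrow> real) set" where
  "RB r n = {A. (\<forall>i<n. \<forall>j<n. A i j = 0 \<or> A i j = 1)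
              \<and> (\<forall>i<n. (\<Sum>j<n. A i j) = real r)
              \<and> (\<forall>j<n. (\<Sum>i<n. A i j) = real r)}"

definition per :: "nat \<Rightarrow> (nat \<Rightarrow> nat \<Rightarrow> real) \<Rightarrow> real" where
  "per n A = (\<Sum>\<sigma> | \<sigma> permutes {..<n}. \<Prod>i<n. A i (\<sigma> i))"

definition selfpow :: "real \<Rightarrow> real" where
  "selfpow x = (if x = 0 then 1 else x powr x)"

definition F :: "nat \<Rightarrow> (nat \<Rightarrow> nat \<Rightarrow> real) \<Rightarrow> real" where
  "F n P = (\<Prod>i<n. \<Prod>j<n. selfpow (1 - P i j))"

end

theory Submission
  imports Defs
begin

text \<open>Since A is a 0/1 matrix with row sums r, every nonzero term of per(A/r) equals r^-n, so
  per(A/r) is r^-n times the number of perfect matchings of the bipartite graph of A, and every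
  row of A/r contributes (1 - 1/r)^(1 - 1/r) exactly r times to F(A/r). Bregman's theorem bounds
  the number of perfect matchings by (r!)^(n/r); we prove it by Schrijver's argument, which
  combines, for each row, the log-sum inequality over the possible partners of that row with the
  induction hypothesis for the matchings avoiding the chosen edge. What remains is the
  one-variable estimate (r!)^(1/r) \<le> r sqrt 2 (1 - 1/r)^(r-1), which follows from
  ln r! \<le> r ln r - r + (r/2) ln 2 for r \<ge> 6 and is checked by hand for r \<le> 5.\<close>

subsection \<open>Bregman's theorem\<close>

text \<open>Perfect matchings between R and C along the relation a; requiring extensionality makes a
  matching determined by its values on R, so that they can be counted.\<close>

definition matchings :: "('a \<Rightarrow> 'b \<Rightarrow> bool) \<Rightarrow> 'a set \<Rightarrow> 'b set \<Rightarrow> ('a \<Rightarrow> 'b) set" where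
  "matchings a R C = {f \<in> R \<rightarrow>\<^sub>E C. bij_betw f R C \<and> (\<forall>i\<in>R. a i (f i))}"

definition deg_in :: "('a \<Rightarrow> 'b \<Rightarrow> bool) \<Rightarrow> 'a \<Rightarrow> 'b set \<Rightarrow> nat" where
  "deg_in a i C = card {k\<in>C. a i k}"

definition ln_root_fact :: "nat \<Rightarrow> real" where
  "ln_root_fact m = ln (fact m) / m"

lemma finite_matchings: "finite R \<Longrightarrow> finite C \<Longrightarrow> finite (matchings a R C)"
  unfolding matchings_def by (rule finite_subset[of _ "R \<rightarrow>\<^sub>E C"]) (auto intro: finite_PiE)

lemma ln_root_fact_rec:
  assumes "m \<ge> 1"
  shows "real m * ln_root_fact m = ln (real m) + real (m - 1) * ln_root_fact (m - 1)"
proof -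
  obtain p where p: "m = Suc p" using assms by (cases m) auto
  have "real m * ln_root_fact m = ln (real m * fact p)"
    using assms by (simp add: ln_root_fact_def p)
  also have "\<dots> = ln (real m) + ln (fact p)" using assms by (simp add: ln_mult)
  also have "ln (fact p) = real p * ln_root_fact p"
    by (cases "p = 0") (simp_all add: ln_root_fact_def)
  finally show ?thesis using p by simp
qed

lemma card_matchings_through:
  assumes "i \<in> R" "k \<in> C" "a i k"
  shows "card {\<sigma>\<in>matchings a R C. \<sigma> i = k} = card (matchings a (R - {i}) (C - {k}))"
proof (rule bij_betw_same_card[of "\<lambda>\<sigma>. \<sigma>(i := undefined)"],
       rule bij_betw_byWitness[of _ "\<lambda>\<tau>. \<tau>(i := k)"])
  show "\<forall>\<sigma>\<in>{\<sigma> \<in> matchings a R C. \<sigma> i = k}. (\<sigma>(i := undefined))(i := k) = \<sigma>" by auto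
  show "\<forall>\<tau>\<in>matchings a (R - {i}) (C - {k}). (\<tau>(i := k))(i := undefined) = \<tau>"
  proof
    fix \<tau> assume "\<tau> \<in> matchings a (R - {i}) (C - {k})"
    then have "\<tau> \<in> (R - {i}) \<rightarrow>\<^sub>E (C - {k})" by (simp add: matchings_def)
    then have "\<tau> i = undefined" by (meson DiffD2 PiE_arb singletonI)
    then show "(\<tau>(i := k))(i := undefined) = \<tau>" by (simp add: fun_eq_iff)
  qed
  show "(\<lambda>\<sigma>. \<sigma>(i := undefined)) ` {\<sigma> \<in> matchings a R C. \<sigma> i = k}
          \<subseteq> matchings a (R - {i}) (C - {k})"
  proof safe
    fix \<sigma> assume s: "\<sigma> \<in> matchings a R C" "k = \<sigma> i"
    have "bij_betw \<sigma> R C" "\<sigma> \<in> R \<rightarrow>\<^sub>E C" "\<forall>i\<in>R. a i (\<sigma> i)"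
      using s by (auto simp: matchings_def)
    moreover from this have b: "bij_betw \<sigma> (R - {i}) (C - {\<sigma> i})"
      using bij_betw_DiffI[of \<sigma> R C "{i}" "{\<sigma> i}"] assms s by auto
    moreover have "bij_betw (\<sigma>(i := undefined)) (R - {i}) (C - {\<sigma> i})"
      by (rule bij_betw_cong[THEN iffD1, OF _ b]) auto
    ultimately show "\<sigma>(i := undefined) \<in> matchings a (R - {i}) (C - {\<sigma> i})"
      unfolding matchings_def bij_betw_def PiE_def extensional_def by auto
  qed
  show "(\<lambda>\<tau>. \<tau>(i := k)) ` matchings a (R - {i}) (C - {k}) \<subseteq> {\<sigma> \<in> matchings a R C. \<sigma> i = k}"
  proof safe
    fix \<tau> assume t: "\<tau> \<in> matchings a (R - {i}) (C - {k})"
    have "bij_betw \<tau> (R - {i}) (C - {k})" using t by (simp add: matchings_def)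
    then have b: "bij_betw (\<tau>(i := k)) (R - {i}) (C - {k})"
      by (rule bij_betw_cong[THEN iffD1, rotated]) auto
    have "bij_betw (\<tau>(i := k)) ((R - {i}) \<union> {i}) ((C - {k}) \<union> {(\<tau>(i := k)) i})"
      by (rule notIn_Un_bij_betw) (use b in auto)
    moreover have "(R - {i}) \<union> {i} = R" "(C - {k}) \<union> {(\<tau>(i := k)) i} = C" using assms by auto
    moreover have "\<tau> \<in> (R - {i}) \<rightarrow>\<^sub>E (C - {k})" "\<forall>j\<in>R - {i}. a j (\<tau> j)"
      using t by (auto simp: matchings_def)
    ultimately show "\<tau>(i := k) \<in> matchings a R C"
      using assms unfolding matchings_def PiE_def extensional_def by auto
  qed simp
qed

lemma sum_matchings_by_image:
  fixes h :: "'b \<Rightarrow> real"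
  assumes "finite R" "finite C" "i \<in> R"
  shows "(\<Sum>\<sigma>\<in>matchings a R C. h (\<sigma> i))
           = (\<Sum>k\<in>{k\<in>C. a i k}. real (card {\<sigma>\<in>matchings a R C. \<sigma> i = k}) * h k)"
proof -
  have "(\<lambda>\<sigma>. \<sigma> i) ` matchings a R C \<subseteq> {k\<in>C. a i k}"
    using assms by (auto simp: matchings_def)
  then have "(\<Sum>\<sigma>\<in>matchings a R C. h (\<sigma> i))
      = (\<Sum>k\<in>{k\<in>C. a i k}. \<Sum>\<sigma>\<in>{\<sigma>\<in>matchings a R C. \<sigma> i = k}. h (\<sigma> i))"
    using assms finite_matchings by (intro sum.group[symmetric]) auto
  also have "\<dots> = (\<Sum>k\<in>{k\<in>C. a i k}. real (card {\<sigma>\<in>matchings a R C. \<sigma> i = k}) * h k)"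
    by (intro sum.cong refl) (simp add: sum.cong[of _ _ _ "\<lambda>_. h _"])
  finally show ?thesis .
qed

lemma log_sum_inequality:
  fixes t :: "'a \<Rightarrow> real"
  assumes "finite K" "K \<noteq> {}" "\<And>k. k \<in> K \<Longrightarrow> t k \<ge> 0"
    and T: "T = (\<Sum>k\<in>K. t k)" "T > 0"
  shows "T * ln T - T * ln (card K) \<le> (\<Sum>k\<in>K. t k * ln (t k))"
proof -
  define m where "m = real (card K)"
  have m: "m > 0" using assms by (simp add: m_def card_gt_0_iff)
  have termwise: "x * ln T - x * ln m + x - T / m \<le> x * ln x" if "x \<ge> 0" for x
  proof (cases "x = 0")
    case False
    then have x: "x > 0" using that by simp
    have "ln (T / (x * m)) \<le> T / (x * m) - 1" using x m T by (intro ln_le_minus_one) simp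
    then have "x * ln (T / (x * m)) \<le> x * (T / (x * m) - 1)" using x by (intro mult_left_mono) auto
    moreover have "ln (T / (x * m)) = ln T - ln x - ln m" using x m T by (simp add: ln_div ln_mult)
    moreover have "x * (T / (x * m) - 1) = T / m - x" using x m by (simp add: field_simps)
    ultimately have "x * (ln T - ln x - ln m) \<le> T / m - x" by simp
    then show ?thesis by (simp add: algebra_simps)
  qed (use m T in simp)
  have "(\<Sum>k\<in>K. t k * ln T - t k * ln m + t k - T / m) \<le> (\<Sum>k\<in>K. t k * ln (t k))"
    by (intro sum_mono termwise assms)
  moreover have "(\<Sum>k\<in>K. t k * ln T - t k * ln m + t k - T / m) = T * ln T - T * ln m"
    using m by (simp add: sum.distrib sum_subtractf T sum_distrib_right m_def)
  ultimately show ?thesis by (simp add: m_def)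
qed

lemma sum_deg_in_delete_partner:
  fixes g :: "nat \<Rightarrow> real"
  assumes "\<sigma> \<in> matchings a R C" "j \<in> R" "finite C"
  defines "d \<equiv> deg_in a j C"
  shows "(\<Sum>i\<in>R-{j}. g (deg_in a j (C - {\<sigma> i}))) = real (card C - d) * g d + real (d - 1) * g (d - 1)"
proof -
  have b: "bij_betw \<sigma> R C" and aj: "a j (\<sigma> j)" using assms by (auto simp: matchings_def)
  have sj: "\<sigma> j \<in> C" using b assms by (auto simp: bij_betw_def)
  have b2: "bij_betw \<sigma> (R - {j}) (C - {\<sigma> j})"
    using bij_betw_DiffI[OF b, of "{j}" "{\<sigma> j}"] assms sj by auto
  have "(\<Sum>i\<in>R-{j}. g (deg_in a j (C - {\<sigma> i}))) = (\<Sum>k\<in>C-{\<sigma> j}. g (deg_in a j (C - {k})))"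
    by (rule sum.reindex_bij_betw[OF b2, of "\<lambda>k. g (deg_in a j (C - {k}))"])
  also have "\<dots> = (\<Sum>k\<in>C-{\<sigma> j}. if a j k then g (d - 1) else g d)"
  proof (rule sum.cong[OF refl])
    fix k assume "k \<in> C - {\<sigma> j}"
    moreover have "{x\<in>C - {k}. a j x} = {x\<in>C. a j x} - {k}" by auto
    ultimately show "g (deg_in a j (C - {k})) = (if a j k then g (d - 1) else g d)"
      using assms by (simp add: deg_in_def card_Diff_singleton_if)
  qed
  also have "\<dots> = real (card ((C - {\<sigma> j}) \<inter> {k. a j k})) * g (d - 1)
                 + real (card ((C - {\<sigma> j}) \<inter> - {k. a j k})) * g d"
    using assms by (simp add: sum.If_cases)
  also have "(C - {\<sigma> j}) \<inter> {k. a j k} = {k\<in>C. a j k} - {\<sigma> j}" by auto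
  also have "(C - {\<sigma> j}) \<inter> - {k. a j k} = C - {k\<in>C. a j k}" using aj by auto
  finally show ?thesis
    using sj aj assms by (simp add: deg_in_def card_Diff_singleton_if card_Diff_subset)
qed

lemma sum_off_diagonal_swap:
  fixes f :: "'a \<Rightarrow> 'a \<Rightarrow> 'b::comm_monoid_add"
  assumes "finite R"
  shows "(\<Sum>i\<in>R. \<Sum>j\<in>R-{i}. f i j) = (\<Sum>j\<in>R. \<Sum>i\<in>R-{j}. f i j)"
proof -
  have "(\<Sum>i\<in>R. \<Sum>j\<in>R-{i}. f i j) = (\<Sum>i\<in>R. \<Sum>j\<in>{y \<in> R. i \<noteq> y}. f i j)"
    by (intro sum.cong) auto
  also have "\<dots> = (\<Sum>j\<in>R. \<Sum>i | i \<in> R \<and> i \<noteq> j. f i j)"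
    by (rule sum.swap_restrict) (use assms in auto)
  also have "\<dots> = (\<Sum>j\<in>R. \<Sum>i\<in>R-{j}. f i j)"
    by (intro sum.cong) auto
  finally show ?thesis .
qed

lemma matchings_row_entropy:
  assumes "finite R" "finite C" "i \<in> R" "matchings a R C \<noteq> {}"
  defines "M \<equiv> matchings a R C"
  defines "P \<equiv> real (card M)"
  shows "P * ln P \<le> (\<Sum>\<sigma>\<in>M. ln (deg_in a i C) + ln (card {\<tau>\<in>M. \<tau> i = \<sigma> i}))"
proof -
  define K where "K = {k\<in>C. a i k}"
  define c where "c k = real (card {\<tau>\<in>M. \<tau> i = k})" for k
  obtain \<sigma>0 where "\<sigma>0 \<in> M" using assms by blast
  then have "\<sigma>0 i \<in> K" using assms by (auto simp: K_def M_def matchings_def)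
  then have "K \<noteq> {}" by blast
  moreover have "P = (\<Sum>k\<in>K. c k)"
    using sum_matchings_by_image[OF assms(1-3), of "\<lambda>_. 1" a] by (simp add: P_def M_def c_def K_def)
  moreover have "P > 0" using assms by (simp add: P_def M_def finite_matchings card_gt_0_iff)
  ultimately have "P * ln P - P * ln (card K) \<le> (\<Sum>k\<in>K. c k * ln (c k))"
    using assms by (intro log_sum_inequality) (simp_all add: K_def c_def)
  also have "(\<Sum>k\<in>K. c k * ln (c k)) = (\<Sum>\<sigma>\<in>M. ln (c (\<sigma> i)))"
    using sum_matchings_by_image[OF assms(1-3), of "\<lambda>k. ln (c k)" a] by (simp add: M_def c_def K_def)
  finally show ?thesis by (simp add: sum.distrib P_def K_def c_def deg_in_def)
qed

lemma matching_exponent_identity: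
  assumes "\<sigma> \<in> matchings a R C" "finite R" "finite C"
  shows "(\<Sum>i\<in>R. ln (deg_in a i C) + (\<Sum>j\<in>R-{i}. ln_root_fact (deg_in a j (C - {\<sigma> i}))))
           = real (card R) * (\<Sum>j\<in>R. ln_root_fact (deg_in a j C))"
proof -
  have b: "bij_betw \<sigma> R C" and adj: "\<forall>i\<in>R. a i (\<sigma> i)" using assms by (auto simp: matchings_def)
  have per_row: "ln (deg_in a j C) + (real (card C - deg_in a j C) * ln_root_fact (deg_in a j C)
                   + real (deg_in a j C - 1) * ln_root_fact (deg_in a j C - 1))
                 = real (card R) * ln_root_fact (deg_in a j C)" if j: "j \<in> R" for j
  proof -
    have "\<sigma> j \<in> {k\<in>C. a j k}" using b adj j by (auto simp: bij_betw_def)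
    then have "deg_in a j C \<ge> 1"
      using assms card_gt_0_iff[of "{k\<in>C. a j k}"] by (fastforce simp: deg_in_def)
    moreover have "deg_in a j C \<le> card C" unfolding deg_in_def using assms by (intro card_mono) auto
    moreover have "card C = card R" using b by (simp add: bij_betw_same_card)
    ultimately show ?thesis
      using ln_root_fact_rec[of "deg_in a j C"] by (simp add: of_nat_diff algebra_simps)
  qed
  have "(\<Sum>i\<in>R. ln (deg_in a i C) + (\<Sum>j\<in>R-{i}. ln_root_fact (deg_in a j (C - {\<sigma> i}))))
      = (\<Sum>j\<in>R. ln (deg_in a j C) + (\<Sum>i\<in>R-{j}. ln_root_fact (deg_in a j (C - {\<sigma> i}))))"
    using sum_off_diagonal_swap[OF assms(2), of "\<lambda>i j. ln_root_fact (deg_in a j (C - {\<sigma> i}))"]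
    by (simp add: sum.distrib)
  also have "\<dots> = (\<Sum>j\<in>R. real (card R) * ln_root_fact (deg_in a j C))"
    by (intro sum.cong refl) (simp only: sum_deg_in_delete_partner[OF assms(1) _ assms(3)] per_row)
  finally show ?thesis by (simp add: sum_distrib_left)
qed

lemma card_matchings_le_if_submatchings_le:
  assumes "finite R" "finite C" "R \<noteq> {}"
    and sub: "\<And>i k. i \<in> R \<Longrightarrow> k \<in> C \<Longrightarrow> a i k \<Longrightarrow>
      real (card (matchings a (R - {i}) (C - {k})))
        \<le> exp (\<Sum>j\<in>R-{i}. ln_root_fact (deg_in a j (C - {k})))"
  shows "real (card (matchings a R C)) \<le> exp (\<Sum>j\<in>R. ln_root_fact (deg_in a j C))"
proof -
  define M where "M = matchings a R C"
  define P where "P = real (card M)"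
  define S where "S = (\<Sum>j\<in>R. ln_root_fact (deg_in a j C))"
  define c where "c i k = real (card {\<tau>\<in>M. \<tau> i = k})" for i k
  show ?thesis
  proof (cases "M = {}")
    case False
    have P: "P > 0" using False assms by (simp add: P_def M_def finite_matchings card_gt_0_iff)
    have ln_c: "ln (c i (\<sigma> i)) \<le> (\<Sum>j\<in>R-{i}. ln_root_fact (deg_in a j (C - {\<sigma> i})))"
      if "\<sigma> \<in> M" "i \<in> R" for \<sigma> i
    proof -
      have "\<sigma> i \<in> C" "a i (\<sigma> i)" using that by (auto simp: M_def matchings_def)
      then have "c i (\<sigma> i) = card (matchings a (R - {i}) (C - {\<sigma> i}))"
        unfolding c_def M_def using that by (intro arg_cong[where f = real] card_matchings_through) auto
      also have "\<dots> \<le> exp (\<Sum>j\<in>R-{i}. ln_root_fact (deg_in a j (C - {\<sigma> i})))"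
        using \<open>\<sigma> i \<in> C\<close> \<open>a i (\<sigma> i)\<close> that by (intro sub)
      moreover have "c i (\<sigma> i) > 0"
      proof -
        have "finite {\<tau>\<in>M. \<tau> i = \<sigma> i}" using assms by (simp add: M_def finite_matchings)
        then show ?thesis using that by (auto simp: c_def card_gt_0_iff)
      qed
      ultimately show ?thesis by (metis exp_le_cancel_iff exp_ln)
    qed
    have "real (card R) * (P * ln P) = (\<Sum>i\<in>R. P * ln P)" by simp
    also have "\<dots> \<le> (\<Sum>i\<in>R. \<Sum>\<sigma>\<in>M. ln (deg_in a i C) + ln (c i (\<sigma> i)))"
      unfolding P_def M_def c_def using assms False
      by (intro sum_mono matchings_row_entropy) (auto simp: M_def)
    also have "\<dots> = (\<Sum>\<sigma>\<in>M. \<Sum>i\<in>R. ln (deg_in a i C) + ln (c i (\<sigma> i)))"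
      by (rule sum.swap)
    also have "\<dots> \<le> (\<Sum>\<sigma>\<in>M. \<Sum>i\<in>R. ln (deg_in a i C) + (\<Sum>j\<in>R-{i}. ln_root_fact (deg_in a j (C - {\<sigma> i}))))"
      by (intro sum_mono add_left_mono ln_c)
    also have "\<dots> = (\<Sum>\<sigma>\<in>M. real (card R) * S)"
      using assms by (intro sum.cong refl) (simp add: matching_exponent_identity M_def S_def)
    also have "\<dots> = real (card R) * (P * S)" by (simp add: P_def)
    finally have "real (card R) * (P * ln P) \<le> real (card R) * (P * S)" .
    moreover have "card R > 0" using assms by (simp add: card_gt_0_iff)
    ultimately have "ln P \<le> S" using P by (simp add: mult_le_cancel_left_pos)
    then have "P \<le> exp S" using P by (metis exp_ln exp_le_cancel_iff)
    then show ?thesis by (simp add: P_def S_def M_def)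
  qed (simp add: M_def)
qed

theorem bregman:
  assumes "finite R" "finite C"
  shows "real (card (matchings a R C)) \<le> exp (\<Sum>j\<in>R. ln_root_fact (deg_in a j C))"
  using assms
proof (induction "card R" arbitrary: R C)
  case 0
  then have "matchings a R C \<subseteq> {\<lambda>_. undefined}" by (auto simp: matchings_def)
  then have "card (matchings a R C) \<le> card {\<lambda>_::'a. undefined::'b}" by (intro card_mono) auto
  then show ?case using 0 by simp
next
  case (Suc N)
  show ?case
  proof (rule card_matchings_le_if_submatchings_le)
    fix i k assume "i \<in> R" "k \<in> C"
    then show "real (card (matchings a (R - {i}) (C - {k})))
        \<le> exp (\<Sum>j\<in>R-{i}. ln_root_fact (deg_in a j (C - {k})))"
      using Suc by (intro Suc.hyps) auto
  qed (use Suc in auto)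
qed

subsection \<open>The one-variable estimate\<close>

lemma two_thirds_le_ln_2: "2/3 \<le> ln (2::real)"
proof -
  have "exp (2::real) = exp 1 ^ 2" using exp_of_nat_mult[of 2 "1::real"] by simp
  also have "\<dots> \<le> (272/100)^2" using e_less_272 by (intro power_mono) auto
  also have "\<dots> \<le> 2 ^ 3" by (simp add: eval_nat_numeral)
  finally have "exp 2 \<le> (2::real) ^ 3" .
  then have "ln (exp 2) \<le> ln ((2::real) ^ 3)" by (subst ln_le_cancel_iff) auto
  then show ?thesis using ln_realpow[of "2::real" 3] by simp
qed

lemma ln_fact_le:
  assumes "r \<ge> 6"
  shows "ln (fact r :: real) \<le> real r / 2 * ln 2 + real r * ln (real r) - real r"
  using assms
proof (induction r rule: nat_induct_at_least)
  case base
  have e6: "exp (6::real) \<le> (272/100)^6"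
    using exp_of_nat_mult[of 6 "1::real"] e_less_272 power_mono[of "exp 1" "272/100::real" 6] by simp
  have "(fact 6 :: real) = 720" by (simp add: fact_numeral)
  then have "ln (fact 6 :: real) + 6 = ln (720 * exp 6)" by (simp add: ln_mult)
  also have "\<dots> \<le> ln (720 * (272/100)^6)" using e6 by (subst ln_le_cancel_iff) auto
  also have "\<dots> \<le> ln (2^3 * 6^6)" by (subst ln_le_cancel_iff) (simp_all add: eval_nat_numeral)
  also have "\<dots> = 3 * ln 2 + 6 * ln 6"
    using ln_mult[of "2^3::real" "6^6"] ln_realpow[of "2::real" 3] ln_realpow[of "6::real" 6] by simp
  finally show ?case by simp
next
  case (Suc r)
  have rpos: "real r > 0" using Suc.hyps by simp
  have "0 \<le> 1 / real r" by simp
  then have "1 + real r * (1 / real r) \<le> (1 + 1 / real r) ^ r"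
    by (intro Bernoulli_inequality) linarith
  then have "2 \<le> (1 + 1 / real r) ^ r" using rpos by simp
  then have "ln 2 \<le> ln ((1 + 1 / real r) ^ r)" by (subst ln_le_cancel_iff) (use rpos in auto)
  also have "\<dots> = real r * (ln (real r + 1) - ln (real r))"
    using rpos by (simp add: ln_realpow ln_div field_simps)
  finally have b: "ln 2 \<le> real r * (ln (real r + 1) - ln (real r))" .
  have "ln (fact (Suc r) :: real) = ln (real r + 1) + ln (fact r)"
    by (simp add: ln_mult add.commute)
  also have "\<dots> \<le> ln (real r + 1) + (real r / 2 * ln 2 + real r * ln (real r) - real r)"
    using Suc.IH by simp
  also have "\<dots> \<le> real (Suc r) / 2 * ln 2 + real (Suc r) * ln (real (Suc r)) - real (Suc r)"
    using b two_thirds_le_ln_2 by (simp add: algebra_simps add_divide_distrib)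
  finally show ?case .
qed

lemma ln_fact_3_le: "ln (fact 3 :: real) \<le> 3 * ln 3 + 3/2 * ln 2 + 3 * 2 * (ln 2 - ln 3)"
proof -
  have f: "(fact 3 :: real) = 2 * 3" by (simp add: fact_numeral)
  have a: "ln ((3::real)^8) \<le> ln (2^13)" by (subst ln_le_cancel_iff) (simp_all add: eval_nat_numeral)
  have "ln (fact 3 :: real) = ln 2 + ln 3" unfolding f by (rule ln_mult_pos) simp_all
  moreover have "ln ((3::real)^8) = 8 * ln 3" "ln ((2::real)^13) = 13 * ln 2" by (simp_all only: ln_realpow)
  ultimately show ?thesis using a by (simp add: algebra_simps)
qed

lemma ln_fact_4_le: "ln (fact 4 :: real) \<le> 4 * ln 4 + 4/2 * ln 2 + 4 * 3 * (ln 3 - ln 4)"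
proof -
  have f: "(fact 4 :: real) = 2^3 * 3" by (simp add: fact_numeral)
  have a: "ln ((2::real)^17) \<le> ln (3^11)" by (subst ln_le_cancel_iff) (simp_all add: eval_nat_numeral)
  have "ln (fact 4 :: real) = ln (2^3) + ln 3" unfolding f by (rule ln_mult_pos) simp_all
  moreover have "ln ((3::real)^11) = 11 * ln 3" "ln ((2::real)^17) = 17 * ln 2" "ln ((2::real)^3) = 3 * ln 2"
    by (simp_all only: ln_realpow)
  moreover have "ln (4::real) = 2 * ln 2" using ln_realpow[of "2::real" 2] by simp
  ultimately show ?thesis using a by (simp add: algebra_simps)
qed

lemma ln_fact_5_le: "ln (fact 5 :: real) \<le> 5 * ln 5 + 5/2 * ln 2 + 5 * 4 * (ln 4 - ln 5)"
proof -
  have f: "(fact 5 :: real) = 2^3 * (3 * 5)" by (simp add: fact_numeral)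
  have a: "ln ((5::real)^32 * 3^2) \<le> ln (2^79)" by (subst ln_le_cancel_iff) (simp_all add: eval_nat_numeral)
  have "ln (fact 5 :: real) = ln (2^3) + (ln 3 + ln 5)" unfolding f
    by (subst ln_mult_pos, simp, simp, subst ln_mult_pos) simp_all
  moreover have "ln ((5::real)^32 * 3^2) = ln (5^32) + ln (3^2)" by (rule ln_mult_pos) simp_all
  moreover have "ln ((5::real)^32) = 32 * ln 5" "ln ((3::real)^2) = 2 * ln 3" "ln ((2::real)^79) = 79 * ln 2"
    "ln ((2::real)^3) = 3 * ln 2" by (simp_all only: ln_realpow)
  moreover have "ln (4::real) = 2 * ln 2" using ln_realpow[of "2::real" 2] by simp
  ultimately show ?thesis using a by (simp add: algebra_simps)
qed

lemma ln_fact_le_selfpow_bound: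
  assumes r: "r \<ge> 2"
  shows "ln (fact r :: real) \<le> real r * ln (real r) + real r / 2 * ln 2
           + real r * (real r - 1) * (ln (real r - 1) - ln (real r))"
proof (cases "r \<ge> 6")
  case True
  have r1: "real r - 1 > 0" using r by simp
  have "ln (real r) - ln (real r - 1) \<le> 1 / (real r - 1)"
    using ln_le_minus_one[of "real r / (real r - 1)"] r1 by (simp add: ln_divide_pos field_simps)
  then have "(real r - 1) * (ln (real r) - ln (real r - 1)) \<le> 1" using r1 by (simp add: field_simps)
  then have "real r * ((real r - 1) * (ln (real r) - ln (real r - 1))) \<le> real r"
    using mult_left_mono[of _ 1 "real r"] by simp
  then have "- real r \<le> real r * (real r - 1) * (ln (real r - 1) - ln (real r))"
    by (simp add: algebra_simps)
  then show ?thesis using ln_fact_le[OF True] by linarith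
next
  case False
  then have "r = 2 \<or> r = 3 \<or> r = 4 \<or> r = 5" using r by auto
  then show ?thesis using ln_fact_3_le ln_fact_4_le ln_fact_5_le by (elim disjE) simp_all
qed

lemma exp_ln_root_fact_le:
  assumes r: "r \<ge> 1"
  shows "exp (ln_root_fact r) \<le> real r * sqrt 2 * selfpow (1 - 1 / real r) ^ r"
proof (cases "r = 1")
  case True then show ?thesis by (simp add: ln_root_fact_def selfpow_def)
next
  case False
  then have r2: "r \<ge> 2" using r by simp
  define x where "x = 1 - 1 / real r"
  have x: "0 < x" using r2 by (simp add: x_def field_simps)
  have "selfpow x ^ r = exp (x * ln x) ^ r" using x by (simp add: selfpow_def powr_def)
  also have "\<dots> = exp (real r * (x * ln x))" by (simp add: exp_of_nat_mult)
  finally have s: "selfpow x ^ r = exp (real r * (x * ln x))" .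
  have "real r * sqrt 2 = exp (ln (real r) + ln 2 / 2)" using r
    by (simp add: exp_add ln_sqrt[symmetric])
  then have rhs: "real r * sqrt 2 * selfpow x ^ r = exp (ln (real r) + ln 2 / 2 + real r * (x * ln x))"
    using s by (simp add: exp_add)
  have rx: "real r * x = real r - 1" using r2 by (simp add: x_def field_simps)
  have lx: "ln x = ln (real r - 1) - ln (real r)"
  proof -
    have "x = (real r - 1) / real r" using r2 by (simp add: x_def field_simps)
    then show ?thesis using r2 by (simp add: ln_divide_pos)
  qed
  have "ln_root_fact r \<le> ln (real r) + ln 2 / 2 + real r * (x * ln x)"
  proof -
    have "real r * (x * ln x) = (real r - 1) * (ln (real r - 1) - ln (real r))"
      using rx lx by (simp add: mult.assoc[symmetric])
    moreover have "ln_root_fact r = ln (fact r) / real r" by (simp add: ln_root_fact_def)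
    moreover have "ln (fact r) / real r \<le> ln (real r) + ln 2 / 2 + (real r - 1) * (ln (real r - 1) - ln (real r))"
      using ln_fact_le_selfpow_bound[OF r2] r2 by (simp add: divide_simps algebra_simps)
    ultimately show ?thesis by simp
  qed
  then show ?thesis unfolding rhs x_def[symmetric] by simp
qed

subsection \<open>Permanents of scaled 0/1 matrices\<close>

lemma per_divide_01:
  assumes "\<forall>i<n. \<forall>j<n. A i j = 0 \<or> A i j = 1"
  shows "per n (\<lambda>i j. A i j / c) =
           real (card {\<sigma>. \<sigma> permutes {..<n} \<and> (\<forall>i<n. A i (\<sigma> i) = 1)}) / c ^ n"
proof -
  have prod_eq: "(\<Prod>i<n. A i (\<sigma> i) / c) = (if \<forall>i<n. A i (\<sigma> i) = 1 then 1 else 0) / c ^ n"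
    if "\<sigma> permutes {..<n}" for \<sigma>
  proof -
    have "(\<Prod>i<n. A i (\<sigma> i)) = (if \<forall>i<n. A i (\<sigma> i) = 1 then 1 else 0)"
    proof (cases "\<forall>i<n. A i (\<sigma> i) = 1")
      case False
      then obtain i where i: "i < n" "A i (\<sigma> i) \<noteq> 1" by blast
      moreover have "\<sigma> i < n" using permutes_in_image[OF that] i by simp
      ultimately have "A i (\<sigma> i) = 0" using assms by blast
      then show ?thesis using False i by (auto intro: prod_zero)
    qed simp
    then show ?thesis by (simp add: prod_dividef)
  qed
  have "per n (\<lambda>i j. A i j / c)
      = (\<Sum>\<sigma> | \<sigma> permutes {..<n}. if \<forall>i<n. A i (\<sigma> i) = 1 then 1 else 0) / c ^ n"
    unfolding per_def by (simp add: prod_eq sum_divide_distrib)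
  also have "(\<Sum>\<sigma> | \<sigma> permutes {..<n}. if \<forall>i<n. A i (\<sigma> i) = 1 then 1 else 0)
      = real (card {\<sigma>. \<sigma> permutes {..<n} \<and> (\<forall>i<n. A i (\<sigma> i) = 1)})"
    by (simp add: sum.If_cases finite_permutations Int_def)
  finally show ?thesis .
qed

lemma card_permutations_le_matchings:
  fixes n :: nat
  shows "card {\<sigma>. \<sigma> permutes {..<n} \<and> (\<forall>i<n. a i (\<sigma> i))} \<le> card (matchings a {..<n} {..<n})"
proof (rule card_inj_on_le[of "\<lambda>\<sigma>. restrict \<sigma> {..<n}"])
  show "inj_on (\<lambda>\<sigma>. restrict \<sigma> {..<n}) {\<sigma>. \<sigma> permutes {..<n} \<and> (\<forall>i<n. a i (\<sigma> i))}"
  proof (rule inj_onI, rule ext)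
    fix \<sigma> \<tau> x
    assume "\<sigma> \<in> {\<sigma>. \<sigma> permutes {..<n} \<and> (\<forall>i<n. a i (\<sigma> i))}"
      "\<tau> \<in> {\<sigma>. \<sigma> permutes {..<n} \<and> (\<forall>i<n. a i (\<sigma> i))}"
      "restrict \<sigma> {..<n} = restrict \<tau> {..<n}"
    then show "\<sigma> x = \<tau> x"
      by (cases "x < n") (auto dest: fun_cong[of _ _ x] simp: permutes_not_in)
  qed
  show "(\<lambda>\<sigma>. restrict \<sigma> {..<n}) ` {\<sigma>. \<sigma> permutes {..<n} \<and> (\<forall>i<n. a i (\<sigma> i))}
          \<subseteq> matchings a {..<n} {..<n}"
  proof safe
    fix \<sigma> assume \<sigma>: "\<sigma> permutes {..<n}" "\<forall>i<n. a i (\<sigma> i)"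
    have "bij_betw (restrict \<sigma> {..<n}) {..<n} {..<n}"
      using permutes_imp_bij[OF \<sigma>(1)] by (rule bij_betw_cong[THEN iffD1, rotated]) simp
    moreover have "restrict \<sigma> {..<n} \<in> {..<n} \<rightarrow>\<^sub>E {..<n}"
      using permutes_in_image[OF \<sigma>(1)] by auto
    ultimately show "restrict \<sigma> {..<n} \<in> matchings a {..<n} {..<n}"
      using \<sigma>(2) unfolding matchings_def by auto
  qed
qed (simp add: finite_matchings)

lemma card_row_ones:
  fixes A :: "nat \<Rightarrow> nat \<Rightarrow> real"
  assumes "\<forall>j<n. A i j = 0 \<or> A i j = 1"
  shows "real (card {k\<in>{..<n}. A i k = 1}) = (\<Sum>j<n. A i j)"
proof -
  have "(\<Sum>j<n. A i j) = (\<Sum>j<n. if A i j = 1 then 1 else 0)"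
    by (rule sum.cong) (use assms in auto)
  also have "\<dots> = (\<Sum>j\<in>{k\<in>{..<n}. A i k = 1}. 1)"
    by (subst sum.inter_filter) simp_all
  finally show ?thesis by simp
qed

lemma F_RB:
  assumes "A \<in> RB r n"
  shows "F n (\<lambda>i j. A i j / real r) = (selfpow (1 - 1 / real r) ^ r) ^ n"
proof -
  have row: "(\<Prod>j<n. selfpow (1 - A i j / real r)) = selfpow (1 - 1 / real r) ^ r" if "i < n" for i
  proof -
    have A01: "\<forall>j<n. A i j = 0 \<or> A i j = 1" and row_sum: "(\<Sum>j<n. A i j) = real r"
      using assms that by (auto simp: RB_def)
    have "real (card {k\<in>{..<n}. A i k = 1}) = real r" using card_row_ones[of n A i] A01 row_sum by simp
    then have card: "card {k\<in>{..<n}. A i k = 1} = r" by (simp only: of_nat_eq_iff)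
    have "(\<Prod>j<n. selfpow (1 - A i j / real r))
        = (\<Prod>j<n. if A i j = 1 then selfpow (1 - 1 / real r) else 1)"
    proof (rule prod.cong[OF refl])
      fix j assume "j \<in> {..<n}"
      then consider "A i j = 0" | "A i j = 1" using A01 by auto
      then show "selfpow (1 - A i j / real r) = (if A i j = 1 then selfpow (1 - 1 / real r) else 1)"
        by cases (simp_all add: selfpow_def)
    qed
    also have "\<dots> = (\<Prod>j\<in>{k\<in>{..<n}. A i k = 1}. selfpow (1 - 1 / real r))"
      by (subst prod.inter_filter) simp_all
    also have "\<dots> = selfpow (1 - 1 / real r) ^ r" by (simp only: prod_constant card)
    finally show ?thesis .
  qed
  show ?thesis unfolding F_def by (simp add: row)
qed

lemma per_RB_le:
  assumes "A \<in> RB r n"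
  shows "per n (\<lambda>i j. A i j / real r) \<le> (exp (ln_root_fact r) / real r) ^ n"
proof -
  define a where "a i j \<longleftrightarrow> A i j = 1" for i j
  have A01: "\<forall>i<n. \<forall>j<n. A i j = 0 \<or> A i j = 1" using assms by (simp add: RB_def)
  have deg: "deg_in a j {..<n} = r" if "j < n" for j
    using card_row_ones[of n A j] assms that by (simp add: RB_def deg_in_def a_def)
  have "per n (\<lambda>i j. A i j / real r)
      = real (card {\<sigma>. \<sigma> permutes {..<n} \<and> (\<forall>i<n. a i (\<sigma> i))}) / real r ^ n"
    using per_divide_01[OF A01] by (simp add: a_def)
  also have "\<dots> \<le> real (card (matchings a {..<n} {..<n})) / real r ^ n"
    by (intro divide_right_mono) (simp_all add: card_permutations_le_matchings)
  also have "\<dots> \<le> exp (\<Sum>j<n. ln_root_fact (deg_in a j {..<n})) / real r ^ n"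
    by (intro divide_right_mono bregman) simp_all
  also have "\<dots> = (exp (ln_root_fact r) / real r) ^ n"
    by (simp add: deg exp_of_nat_mult power_divide)
  finally show ?thesis .
qed

theorem mainTheorem9:
  fixes r n :: nat and A :: "nat \<Rightarrow> nat \<Rightarrow> real"
  assumes "1 \<le> r" and "r \<le> n" and "A \<in> RB r n"
  shows "per n (\<lambda>i j. A i j / real r) \<le> sqrt 2 ^ n * F n (\<lambda>i j. A i j / real r)"
proof -
  have "exp (ln_root_fact r) / real r \<le> sqrt 2 * selfpow (1 - 1 / real r) ^ r"
    using exp_ln_root_fact_le[OF assms(1)] assms(1) by (simp add: divide_le_eq mult_ac)
  then have "(exp (ln_root_fact r) / real r) ^ n \<le> (sqrt 2 * selfpow (1 - 1 / real r) ^ r) ^ n"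
    by (intro power_mono divide_nonneg_nonneg) simp_all
  then show ?thesis
    using per_RB_le[OF assms(3)] by (simp add: F_RB[OF assms(3)] power_mult_distrib)
qed

end
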